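(* Let $(\rho,\sigma)\in\mathfrak V$ with $\sigma\le0$ and $P,Q\in W^{(l)}\setminus\{0\}$. If $[P,Q]_{\rho,\sigma}=0$, then $\mathrm{st}_{\rho,\sigma}(P)$ and $\mathrm{st}_{\rho,\sigma}(Q)$ are aligned, and $\mathrm{en}_{\rho,\sigma}(P)$ and $\mathrm{en}_{\rho,\sigma}(Q)$ are aligned.
   Context: $K$ is a field of characteristic zero, $l\in\mathbb{N}$. $W^{(l)}$ is the associative $K$-algebra with $K$-basis $\{X^{i/l}Y^j:i\in\mathbb{Z},j\in\mathbb{N}_0\}$, powers of $X$ multiplying as Laurent monomials and $[Y,X^\alpha]=\alpha X^{\alpha-1}$ for $\alpha\in\frac1l\mathbb{Z}$. $\Psi^{(l)}(X^{i/l}Y^j)=x^{i/l}y^j\in K[x^{\pm1/l},y]$; supports are sets of exponents with nonzero coefficient. $\mathfrak V=\{(\rho,\sigma)\in\mathbb{Z}^2:\gcd(\rho,\sigma)=1,\rho+\sigma>0\}$. For $P\ne0$: $v_{\rho,\sigma}(P)=\max\{\rho a+\sigma b:(a,b)\in\mathrm{Supp}(P)\}$; $\ell_{\rho,\sigma}(P)$ = sum of terms of $\Psi^{(l)}(P)$ attaining it; $\mathrm{st}_{\rho,\sigma}(P)$: among points $(a,b)\in\mathrm{Supp}(\ell_{\rho,\sigma}(P))$ maximizing $a-b$, the one with largest $a$; $\mathrm{en}_{\rho,\sigma}(P)$: among those maximizing $b-a$, the one with largest $b$. $[P,Q]_{\rho,\sigma}:=0$ if $[P,Q]=0$ or $v_{\rho,\sigma}([P,Q])<v_{\rho,\sigma}(P)+v_{\rho,\sigma}(Q)-(\rho+\sigma)$,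 else $\ell_{\rho,\sigma}([P,Q])$. Vectors $(a_1,a_2),(b_1,b_2)$ are aligned if $a_1b_2-a_2b_1=0$. *)

theory Defs
  imports Complex_Main
begin

text \<open>An element of W^(l) over a field K of characteristic zero is represented by its
coefficient function: P (i,j) is the coefficient of the basis element X^(i/l) Y^j.\<close>

type_synonym 'a wel = "int \<times> nat \<Rightarrow> 'a"

definition in_W :: "'a::zero wel \<Rightarrow> bool" where
  "in_W P \<longleftrightarrow> finite {ij. P ij \<noteq> 0}"

definition ffact_w :: "nat \<Rightarrow> 'a::field_char_0 \<Rightarrow> 'a" where
  "ffact_w m b = (\<Prod>k<m. b - of_nat k)"

text \<open>Multiplication in W^(l), normal ordered:
 (X^(i1/l) Y^j1)(X^(i2/l) Y^j2) = \<Sum>m\<le>j1 (j1 choose m) ffact_m(i2/l) X^((i1+i2-m l)/l) Y^(j1+j2-m),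
 which follows from [Y, X^a] = a X^(a-1).\<close>
definition W_mult :: "nat \<Rightarrow> 'a::field_char_0 wel \<Rightarrow> 'a wel \<Rightarrow> 'a wel" where
  "W_mult l P Q = (\<lambda>(i,j). \<Sum>((i1,j1),(i2,j2),m) \<in>
       {((i1,j1),(i2,j2),m). P (i1,j1) \<noteq> 0 \<and> Q (i2,j2) \<noteq> 0 \<and> m \<le> j1 \<and>
          i1 + i2 - int m * int l = i \<and> j1 + j2 = j + m}.
       P (i1,j1) * Q (i2,j2) * of_nat (j1 choose m) * ffact_w m (of_int i2 / of_nat l))"

definition W_comm :: "nat \<Rightarrow> 'a::field_char_0 wel \<Rightarrow> 'a wel \<Rightarrow> 'a wel" where
  "W_comm l P Q = (\<lambda>ij. W_mult l P Q ij - W_mult l Q P ij)"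

definition Supp :: "nat \<Rightarrow> 'a::zero wel \<Rightarrow> (rat \<times> rat) set" where
  "Supp l P = {(of_int i / of_nat l, of_nat j) | i j. P (i,j) \<noteq> 0}"

definition vval :: "nat \<Rightarrow> int \<Rightarrow> int \<Rightarrow> 'a::zero wel \<Rightarrow> rat" where
  "vval l \<rho> \<sigma> P = Max ((\<lambda>(a,b). of_int \<rho> * a + of_int \<sigma> * b) ` Supp l P)"

definition lead :: "nat \<Rightarrow> int \<Rightarrow> int \<Rightarrow> 'a::zero wel \<Rightarrow> 'a wel" where
  "lead l \<rho> \<sigma> P = (\<lambda>(i,j). if of_int \<rho> * (of_int i / of_nat l) + of_int \<sigma> * of_nat j
                               = vval l \<rho> \<sigma> P then P (i,j) else 0)"

definition st :: "nat \<Rightarrow> int \<Rightarrow> int \<Rightarrow> 'a::zero wel \<Rightarrow> rat \<times> rat" where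
  "st l \<rho> \<sigma> P = (let S = Supp l (lead l \<rho> \<sigma> P);
                     M = Max ((\<lambda>(a,b). a - b) ` S);
                     T = {(a,b) \<in> S. a - b = M}
                 in THE p. p \<in> T \<and> fst p = Max (fst ` T))"

definition en :: "nat \<Rightarrow> int \<Rightarrow> int \<Rightarrow> 'a::zero wel \<Rightarrow> rat \<times> rat" where
  "en l \<rho> \<sigma> P = (let S = Supp l (lead l \<rho> \<sigma> P);
                     M = Max ((\<lambda>(a,b). b - a) ` S);
                     T = {(a,b) \<in> S. b - a = M}
                 in THE p. p \<in> T \<and> snd p = Max (snd ` T))"

definition bracket_rs :: "nat \<Rightarrow> int \<Rightarrow> int \<Rightarrow> 'a::field_char_0 wel \<Rightarrow> 'a wel \<Rightarrow> 'a wel" where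
  "bracket_rs l \<rho> \<sigma> P Q = (let C = W_comm l P Q in
     if C = (\<lambda>_. 0) \<or> vval l \<rho> \<sigma> C < vval l \<rho> \<sigma> P + vval l \<rho> \<sigma> Q - of_int (\<rho> + \<sigma>)
     then (\<lambda>_. 0) else lead l \<rho> \<sigma> C)"

definition aligned :: "rat \<times> rat \<Rightarrow> rat \<times> rat \<Rightarrow> bool" where
  "aligned A B \<longleftrightarrow> fst A * snd B - snd A * fst B = 0"

definition frakV :: "(int \<times> int) set" where
  "frakV = {(\<rho>,\<sigma>). gcd \<rho> \<sigma> = 1 \<and> \<rho> + \<sigma> > 0}"

end

theory Submission
  imports Defs
begin

text \<open>Since \<open>\<sigma> \<le> 0 < \<rho> + \<sigma>\<close>, we have \<open>\<rho> > 0\<close>, and on the leading edge \<open>\<rho> a + \<sigma> b = v\<close>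
the quantity \<open>a - b\<close> strictly decreases with \<open>b\<close>. Hence \<open>st(P)\<close> is the leading monomial of
least \<open>Y\<close>-degree and \<open>en(P)\<close> the one of greatest \<open>Y\<close>-degree. Take these corners
\<open>(i\<^sub>1,j\<^sub>1)\<close> of \<open>P\<close> and \<open>(i\<^sub>2,j\<^sub>2)\<close> of \<open>Q\<close> (both least or both greatest). At the exponent
\<open>(i\<^sub>1+i\<^sub>2-l, j\<^sub>1+j\<^sub>2-1)\<close>, which has weight \<open>v(P)+v(Q)-(\<rho>+\<sigma>)\<close>, the order-0 parts of \<open>PQ\<close>
and \<open>QP\<close> cancel, no term of order \<open>\<ge> 2\<close> reaches that weight, and the only order-1 term
comes from the two corners. So the coefficient of \<open>[P,Q]\<close> there is
\<open>P(i\<^sub>1,j\<^sub>1) Q(i\<^sub>2,j\<^sub>2) (j\<^sub>1 i\<^sub>2 - j\<^sub>2 i\<^sub>1)/l\<close>; it must vanish when \<open>[P,Q]\<^sub>\<rho>\<^sub>,\<^sub>\<sigma> = 0\<close>,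
which is exactly the alignment of the corners.\<close>

definition W_mult_terms ::
    "nat \<Rightarrow> 'a::field_char_0 wel \<Rightarrow> 'a wel \<Rightarrow> int \<Rightarrow> nat \<Rightarrow> ((int \<times> nat) \<times> (int \<times> nat) \<times> nat) set" where
  "W_mult_terms l P Q i j = {((i1,j1),(i2,j2),m). P (i1,j1) \<noteq> 0 \<and> Q (i2,j2) \<noteq> 0 \<and> m \<le> j1 \<and>
     i1 + i2 - int m * int l = i \<and> j1 + j2 = j + m}"

definition W_mult_term ::
    "nat \<Rightarrow> 'a::field_char_0 wel \<Rightarrow> 'a wel \<Rightarrow> (int \<times> nat) \<times> (int \<times> nat) \<times> nat \<Rightarrow> 'a" where
  "W_mult_term l P Q = (\<lambda>((i1,j1),(i2,j2),m).
     P (i1,j1) * Q (i2,j2) * of_nat (j1 choose m) * ffact_w m (of_int i2 / of_nat l))"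

lemma W_mult_apply: "W_mult l P Q (i,j) = (\<Sum>t\<in>W_mult_terms l P Q i j. W_mult_term l P Q t)"
  unfolding W_mult_def W_mult_terms_def W_mult_term_def by simp

lemma sum_W_mult_terms_order0_swap:
  "(\<Sum>t\<in>{t\<in>W_mult_terms l P Q i j. snd (snd t) = 0}. W_mult_term l P Q t) =
   (\<Sum>t\<in>{t\<in>W_mult_terms l Q P i j. snd (snd t) = 0}. W_mult_term l Q P t)"
  by (rule sum.reindex_bij_witness[where i="\<lambda>((a,b),(c,d),m). ((c,d),(a,b),m)"
                                     and j="\<lambda>((a,b),(c,d),m). ((c,d),(a,b),m)"])
     (auto simp: W_mult_terms_def W_mult_term_def ffact_w_def)

lemma sum_W_mult_terms_order1_single:
  assumes single: "\<And>a b c d. ((a,b),(c,d),1) \<in> W_mult_terms l P Q i j \<Longrightarrow> (a,b) = (i1,j1) \<and> (c,d) = (i2,j2)"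
    and nz: "P (i1,j1) \<noteq> 0" "Q (i2,j2) \<noteq> 0" and ij: "i = i1 + i2 - int l" "j + 1 = j1 + j2"
  shows "(\<Sum>t\<in>{t\<in>W_mult_terms l P Q i j. snd (snd t) = 1}. W_mult_term l P Q t) =
         P (i1,j1) * Q (i2,j2) * (of_nat j1 * (of_int i2 / of_nat l))"
proof -
  have order1: "{t\<in>W_mult_terms l P Q i j. snd (snd t) = 1} \<subseteq> {((i1,j1),(i2,j2),1)}"
    using single by (auto simp del: One_nat_def)
  show ?thesis
  proof (cases "j1 = 0")
    case True
    have "((i1,j1),(i2,j2),1) \<notin> W_mult_terms l P Q i j"
      using True unfolding W_mult_terms_def by simp
    then have no_terms: "{t\<in>W_mult_terms l P Q i j. snd (snd t) = 1} = {}"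
      using order1 by blast
    show ?thesis unfolding no_terms using True by simp
  next
    case False
    then have "((i1,j1),(i2,j2),1) \<in> W_mult_terms l P Q i j"
      using nz ij unfolding W_mult_terms_def by simp
    then have "{t\<in>W_mult_terms l P Q i j. snd (snd t) = 1} = {((i1,j1),(i2,j2),1)}"
      using order1 by auto
    then show ?thesis by (simp add: W_mult_term_def ffact_w_def)
  qed
qed

lemma sum_W_mult_terms_order_le_1:
  assumes "in_W P" "in_W Q" and order: "\<And>a b c d m. ((a,b),(c,d),m) \<in> W_mult_terms l P Q i j \<Longrightarrow> m \<le> 1"
  shows "(\<Sum>t\<in>W_mult_terms l P Q i j. W_mult_term l P Q t) =
         (\<Sum>t\<in>{t\<in>W_mult_terms l P Q i j. snd (snd t) = 0}. W_mult_term l P Q t) +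
         (\<Sum>t\<in>{t\<in>W_mult_terms l P Q i j. snd (snd t) = 1}. W_mult_term l P Q t)"
proof -
  have "W_mult_terms l P Q i j \<subseteq> {ij. P ij \<noteq> 0} \<times> {ij. Q ij \<noteq> 0} \<times> {0,1}"
    using order unfolding W_mult_terms_def by fastforce
  then have finite: "finite (W_mult_terms l P Q i j)"
    by (rule finite_subset) (use assms(1,2) in \<open>auto simp: in_W_def\<close>)
  have split: "W_mult_terms l P Q i j =
      {t\<in>W_mult_terms l P Q i j. snd (snd t) = 0} \<union> {t\<in>W_mult_terms l P Q i j. snd (snd t) = 1}"
    using order by fastforce
  show ?thesis
    by (subst split, rule sum.union_disjoint) (use finite in auto)
qed

lemma W_comm_apply_single_order1_term:
  fixes P Q :: "'a::field_char_0 wel"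
  assumes "in_W P" "in_W Q"
    and order_PQ: "\<And>a b c d m. ((a,b),(c,d),m) \<in> W_mult_terms l P Q i j \<Longrightarrow> m \<le> 1"
    and order_QP: "\<And>a b c d m. ((a,b),(c,d),m) \<in> W_mult_terms l Q P i j \<Longrightarrow> m \<le> 1"
    and single_PQ: "\<And>a b c d. ((a,b),(c,d),1) \<in> W_mult_terms l P Q i j \<Longrightarrow> (a,b) = (i1,j1) \<and> (c,d) = (i2,j2)"
    and single_QP: "\<And>a b c d. ((a,b),(c,d),1) \<in> W_mult_terms l Q P i j \<Longrightarrow> (a,b) = (i2,j2) \<and> (c,d) = (i1,j1)"
    and nz: "P (i1,j1) \<noteq> 0" "Q (i2,j2) \<noteq> 0" and ij: "i = i1 + i2 - int l" "j + 1 = j1 + j2"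
  shows "W_comm l P Q (i,j) =
    P (i1,j1) * Q (i2,j2) * (of_nat j1 * (of_int i2 / of_nat l) - of_nat j2 * (of_int i1 / of_nat l))"
proof -
  have "W_comm l P Q (i,j) = P (i1,j1) * Q (i2,j2) * (of_nat j1 * (of_int i2 / of_nat l))
      - Q (i2,j2) * P (i1,j1) * (of_nat j2 * (of_int i1 / of_nat l))"
    unfolding W_comm_def W_mult_apply
    using sum_W_mult_terms_order_le_1[OF assms(1,2) order_PQ] sum_W_mult_terms_order_le_1[OF assms(2,1) order_QP]
      sum_W_mult_terms_order0_swap[of l P Q i j]
      sum_W_mult_terms_order1_single[of l P Q i j i1 j1 i2 j2, OF single_PQ nz ij]
      sum_W_mult_terms_order1_single[of l Q P i j i2 j2 i1 j1, OF single_QP nz(2,1)] ij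
    by (simp add: add.commute)
  then show ?thesis by (simp add: algebra_simps)
qed

lemma in_W_W_mult:
  assumes P: "in_W P" and Q: "in_W Q"
  shows "in_W (W_mult l P Q)"
proof -
  let ?SP = "{ij. P ij \<noteq> 0}" and ?SQ = "{ij. Q ij \<noteq> 0}"
  define N where "N = Max (snd ` ?SP)"
  define pos where "pos = (\<lambda>((a::int,b::nat),(c::int,d::nat),m::nat). (a + c - int m * int l, b + d - m))"
  have "{ij. W_mult l P Q ij \<noteq> 0} \<subseteq> pos ` (?SP \<times> ?SQ \<times> {..N})"
  proof
    fix ij assume "ij \<in> {ij. W_mult l P Q ij \<noteq> 0}"
    moreover obtain i j where ij: "ij = (i,j)" by fastforce
    ultimately have "W_mult_terms l P Q i j \<noteq> {}"
      by (intro notI) (simp add: W_mult_apply)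
    then obtain a b c d m where "P (a,b) \<noteq> 0" "Q (c,d) \<noteq> 0" "m \<le> b"
        "a + c - int m * int l = i" "b + d = j + m"
      unfolding W_mult_terms_def by auto
    moreover have "b \<le> N"
      using P \<open>P (a,b) \<noteq> 0\<close> unfolding N_def in_W_def by (intro Max_ge) force+
    ultimately show "ij \<in> pos ` (?SP \<times> ?SQ \<times> {..N})"
      using ij by (intro image_eqI[where x="((a,b),(c,d),m)"]) (auto simp: pos_def)
  qed
  moreover have "finite (?SP \<times> ?SQ \<times> {..N})" using P Q unfolding in_W_def by blast
  ultimately show ?thesis unfolding in_W_def by (meson finite_imageI finite_subset)
qed

lemma in_W_W_comm:
  assumes "in_W P" "in_W Q"
  shows "in_W (W_comm l P Q)"
proof -
  have "finite ({ij. W_mult l P Q ij \<noteq> 0} \<union> {ij. W_mult l Q P ij \<noteq> 0})"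
    using in_W_W_mult[OF assms] in_W_W_mult[OF assms(2,1)] unfolding in_W_def by blast
  then show ?thesis
    unfolding in_W_def W_comm_def by (rule rev_finite_subset) auto
qed

definition weight :: "nat \<Rightarrow> int \<Rightarrow> int \<Rightarrow> int \<times> nat \<Rightarrow> rat" where
  "weight l \<rho> \<sigma> = (\<lambda>(i,j). of_int \<rho> * (of_int i / of_nat l) + of_int \<sigma> * of_nat j)"

definition leading_terms :: "nat \<Rightarrow> int \<Rightarrow> int \<Rightarrow> 'a::zero wel \<Rightarrow> (int \<times> nat) set" where
  "leading_terms l \<rho> \<sigma> P = {ij. P ij \<noteq> 0 \<and> weight l \<rho> \<sigma> ij = vval l \<rho> \<sigma> P}"

lemma vval_eq_Max_weight: "vval l \<rho> \<sigma> P = Max (weight l \<rho> \<sigma> ` {ij. P ij \<noteq> 0})"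
proof -
  have "(\<lambda>(a,b). of_int \<rho> * a + of_int \<sigma> * b) ` Supp l P = weight l \<rho> \<sigma> ` {ij. P ij \<noteq> 0}"
    unfolding Supp_def weight_def by force
  then show ?thesis unfolding vval_def by simp
qed

lemma weight_le_vval: "in_W P \<Longrightarrow> P ij \<noteq> 0 \<Longrightarrow> weight l \<rho> \<sigma> ij \<le> vval l \<rho> \<sigma> P"
  unfolding vval_eq_Max_weight in_W_def by (rule Max_ge) auto

lemma leading_terms_nonempty:
  assumes "in_W P" "P \<noteq> (\<lambda>_. 0)"
  shows "leading_terms l \<rho> \<sigma> P \<noteq> {}"
proof -
  have "vval l \<rho> \<sigma> P \<in> weight l \<rho> \<sigma> ` {ij. P ij \<noteq> 0}"
    unfolding vval_eq_Max_weight using assms unfolding in_W_def by (intro Max_in) auto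
  then show ?thesis unfolding leading_terms_def by force
qed

lemma finite_leading_terms: "in_W P \<Longrightarrow> finite (leading_terms l \<rho> \<sigma> P)"
  unfolding in_W_def leading_terms_def by (rule rev_finite_subset) auto

lemma Supp_lead:
  "Supp l (lead l \<rho> \<sigma> P) = (\<lambda>(i,j). (of_int i / of_nat l, of_nat j)) ` leading_terms l \<rho> \<sigma> P"
  unfolding Supp_def lead_def leading_terms_def weight_def by (auto split: if_splits)

lemma lead_neq_zero: "in_W P \<Longrightarrow> P \<noteq> (\<lambda>_. 0) \<Longrightarrow> lead l \<rho> \<sigma> P \<noteq> (\<lambda>_. 0)"
  using Supp_lead[of l \<rho> \<sigma> P] leading_terms_nonempty[of P l \<rho> \<sigma>] unfolding Supp_def by force

lemma leading_terms_same_Y_degree: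
  assumes "(a,b) \<in> leading_terms l \<rho> \<sigma> P" "(c,b) \<in> leading_terms l \<rho> \<sigma> P" "\<rho> \<noteq> 0" "l > 0"
  shows "a = c"
proof -
  have "weight l \<rho> \<sigma> (a,b) = weight l \<rho> \<sigma> (c,b)"
    using assms(1,2) unfolding leading_terms_def by simp
  then have "of_int \<rho> * (of_int a / of_nat l) = of_int \<rho> * (of_int c / (of_nat l :: rat))"
    unfolding weight_def by simp
  then have "(of_int a :: rat) = of_int c" using assms(3,4) by simp
  then show ?thesis by simp
qed

lemma weight_of_W_mult_term:
  assumes "((a,b),(c,d),m) \<in> W_mult_terms l P Q i j" "l > 0"
  shows "weight l \<rho> \<sigma> (i,j) = weight l \<rho> \<sigma> (a,b) + weight l \<rho> \<sigma> (c,d) - of_nat m * of_int (\<rho> + \<sigma>)"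
proof -
  have ij: "i = a + c - int m * int l" "j = b + d - m" "m \<le> b + d"
    using assms(1) unfolding W_mult_terms_def by auto
  have i: "(of_int i :: rat) / of_nat l = of_int a / of_nat l + of_int c / of_nat l - of_nat m"
    using assms(2) unfolding ij by (simp add: field_simps)
  have j: "(of_nat j :: rat) = of_nat b + of_nat d - of_nat m"
    unfolding ij using ij(3) by (simp add: of_nat_diff)
  have "weight l \<rho> \<sigma> (i,j) = of_int \<rho> * (of_int a / of_nat l + of_int c / of_nat l - of_nat m)
      + of_int \<sigma> * (of_nat b + of_nat d - of_nat m)"
    unfolding weight_def prod.case i j by (rule refl)
  then show ?thesis unfolding weight_def by (simp add: algebra_simps)
qed

text \<open>A term of \<open>A B\<close> of order \<open>m\<close> has weight at most \<open>v(A) + v(B) - m (\<rho> + \<sigma>)\<close>.\<close>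
lemma W_mult_term_order_le_1:
  assumes A: "in_W A" and B: "in_W B" and l: "l > 0" and \<rho>\<sigma>: "\<rho> + \<sigma> > 0"
    and t: "((a,b),(c,d),m) \<in> W_mult_terms l A B i j"
    and ij: "weight l \<rho> \<sigma> (i,j) = vval l \<rho> \<sigma> A + vval l \<rho> \<sigma> B - of_int (\<rho> + \<sigma>)"
  shows "m \<le> 1 \<and> (m = 1 \<longrightarrow> (a,b) \<in> leading_terms l \<rho> \<sigma> A \<and> (c,d) \<in> leading_terms l \<rho> \<sigma> B)"
proof -
  have nz: "A (a,b) \<noteq> 0" "B (c,d) \<noteq> 0" using t unfolding W_mult_terms_def by auto
  have le: "weight l \<rho> \<sigma> (a,b) \<le> vval l \<rho> \<sigma> A" "weight l \<rho> \<sigma> (c,d) \<le> vval l \<rho> \<sigma> B"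
    using weight_le_vval[OF A nz(1)] weight_le_vval[OF B nz(2)] .
  have "of_nat m * of_int (\<rho> + \<sigma>) \<le> (1::rat) * of_int (\<rho> + \<sigma>)"
    using weight_of_W_mult_term[OF t l, of \<rho> \<sigma>] ij le by simp
  then have "m \<le> 1" using \<rho>\<sigma> by (simp only: mult_le_cancel_right) simp
  moreover have "(a,b) \<in> leading_terms l \<rho> \<sigma> A \<and> (c,d) \<in> leading_terms l \<rho> \<sigma> B" if "m = 1"
    using weight_of_W_mult_term[OF t l, of \<rho> \<sigma>] ij le nz that unfolding leading_terms_def by auto
  ultimately show ?thesis by blast
qed

lemma bracket_rs_neq_zero:
  assumes "in_W P" "in_W Q" "W_comm l P Q ij \<noteq> 0"
    and "vval l \<rho> \<sigma> P + vval l \<rho> \<sigma> Q - of_int (\<rho> + \<sigma>) \<le> weight l \<rho> \<sigma> ij"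
  shows "bracket_rs l \<rho> \<sigma> P Q \<noteq> (\<lambda>_. 0)"
proof -
  have C: "in_W (W_comm l P Q)" "W_comm l P Q \<noteq> (\<lambda>_. 0)"
    using in_W_W_comm[OF assms(1,2)] assms(3) by auto
  have "weight l \<rho> \<sigma> ij \<le> vval l \<rho> \<sigma> (W_comm l P Q)"
    using weight_le_vval[OF C(1) assms(3)] .
  then have "bracket_rs l \<rho> \<sigma> P Q = lead l \<rho> \<sigma> (W_comm l P Q)"
    using assms(4) C(2) unfolding bracket_rs_def Let_def by auto
  with lead_neq_zero[OF C] show ?thesis by simp
qed

lemma weight_at_corner:
  assumes l: "l > 0" and p: "(i1,j1) \<in> leading_terms l \<rho> \<sigma> P" and q: "(i2,j2) \<in> leading_terms l \<rho> \<sigma> Q"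
    and j: "j + 1 = j1 + j2"
  shows "weight l \<rho> \<sigma> (i1 + i2 - int l, j) = vval l \<rho> \<sigma> P + vval l \<rho> \<sigma> Q - of_int (\<rho> + \<sigma>)"
proof -
  have j': "(of_nat j :: rat) = of_nat j1 + of_nat j2 - 1"
    using arg_cong[OF j, of "of_nat :: nat \<Rightarrow> rat"] by simp
  have i': "(of_int (i1 + i2 - int l) :: rat) / of_nat l = of_int i1 / of_nat l + of_int i2 / of_nat l - 1"
    using l by (simp add: field_simps)
  have "weight l \<rho> \<sigma> (i1 + i2 - int l, j) = weight l \<rho> \<sigma> (i1,j1) + weight l \<rho> \<sigma> (i2,j2) - of_int (\<rho> + \<sigma>)"
    unfolding weight_def prod.case i' j' by (simp add: algebra_simps)
  then show ?thesis using p q unfolding leading_terms_def by simp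
qed

lemma W_comm_apply_corner:
  fixes P Q :: "'a::field_char_0 wel"
  assumes l: "l > 0" and \<rho>: "\<rho> > 0" and \<rho>\<sigma>: "\<rho> + \<sigma> > 0"
    and P: "in_W P" and Q: "in_W Q"
    and p: "(i1,j1) \<in> leading_terms l \<rho> \<sigma> P" and q: "(i2,j2) \<in> leading_terms l \<rho> \<sigma> Q"
    and corner: "\<And>a b c d. (a,b) \<in> leading_terms l \<rho> \<sigma> P \<Longrightarrow> (c,d) \<in> leading_terms l \<rho> \<sigma> Q \<Longrightarrow>
                   b + d = j1 + j2 \<Longrightarrow> b = j1"
    and j: "j + 1 = j1 + j2"
  shows "W_comm l P Q (i1 + i2 - int l, j) =
    P (i1,j1) * Q (i2,j2) * of_int (int j1 * i2 - i1 * int j2) / of_nat l"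
proof -
  let ?i = "i1 + i2 - int l"
  have nz: "P (i1,j1) \<noteq> 0" "Q (i2,j2) \<noteq> 0" using p q unfolding leading_terms_def by auto
  have unique: "(a,b) = (i1,j1) \<and> (c,d) = (i2,j2)"
    if "(a,b) \<in> leading_terms l \<rho> \<sigma> P" "(c,d) \<in> leading_terms l \<rho> \<sigma> Q" "b + d = j + 1" for a b c d
  proof -
    have "b = j1" "d = j2" using corner[OF that(1,2)] that(3) j by auto
    then show ?thesis
      using that(1,2) p q leading_terms_same_Y_degree[OF _ _ _ l] \<rho> by blast
  qed
  have weight_PQ: "weight l \<rho> \<sigma> (?i,j) = vval l \<rho> \<sigma> P + vval l \<rho> \<sigma> Q - of_int (\<rho> + \<sigma>)"
    by (rule weight_at_corner[OF l p q j])
  then have weight_QP: "weight l \<rho> \<sigma> (?i,j) = vval l \<rho> \<sigma> Q + vval l \<rho> \<sigma> P - of_int (\<rho> + \<sigma>)"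
    by simp
  note order_PQ = W_mult_term_order_le_1[OF P Q l \<rho>\<sigma> _ weight_PQ]
  note order_QP = W_mult_term_order_le_1[OF Q P l \<rho>\<sigma> _ weight_QP]
  have "W_comm l P Q (?i,j) =
      P (i1,j1) * Q (i2,j2) * (of_nat j1 * (of_int i2 / of_nat l) - of_nat j2 * (of_int i1 / of_nat l))"
  proof (rule W_comm_apply_single_order1_term[OF P Q _ _ _ _ nz refl j])
    show "m \<le> 1" if "((a,b),(c,d),m) \<in> W_mult_terms l P Q ?i j" for a b c d m
      using order_PQ[OF that] by simp
    show "m \<le> 1" if "((a,b),(c,d),m) \<in> W_mult_terms l Q P ?i j" for a b c d m
      using order_QP[OF that] by simp
    show "(a,b) = (i1,j1) \<and> (c,d) = (i2,j2)" if "((a,b),(c,d),1) \<in> W_mult_terms l P Q ?i j" for a b c d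
      using order_PQ[OF that] unique that unfolding W_mult_terms_def by auto
    show "(a,b) = (i2,j2) \<and> (c,d) = (i1,j1)" if "((a,b),(c,d),1) \<in> W_mult_terms l Q P ?i j" for a b c d
      using order_QP[OF that] unique[of c d a b] that unfolding W_mult_terms_def by (simp add: add.commute)
  qed
  also have "\<dots> = P (i1,j1) * Q (i2,j2) * of_int (int j1 * i2 - i1 * int j2) / of_nat l"
    by (simp add: diff_divide_distrib algebra_simps)
  finally show ?thesis .
qed

lemma corner_cross_product_eq:
  fixes P Q :: "'a::field_char_0 wel"
  assumes l: "l > 0" and \<rho>: "\<rho> > 0" and \<rho>\<sigma>: "\<rho> + \<sigma> > 0"
    and P: "in_W P" and Q: "in_W Q"
    and p: "(i1,j1) \<in> leading_terms l \<rho> \<sigma> P" and q: "(i2,j2) \<in> leading_terms l \<rho> \<sigma> Q"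
    and corner: "\<And>a b c d. (a,b) \<in> leading_terms l \<rho> \<sigma> P \<Longrightarrow> (c,d) \<in> leading_terms l \<rho> \<sigma> Q \<Longrightarrow>
                   b + d = j1 + j2 \<Longrightarrow> b = j1"
    and bracket: "bracket_rs l \<rho> \<sigma> P Q = (\<lambda>_. 0)"
  shows "i1 * int j2 = int j1 * i2"
proof (cases "j1 + j2 = 0")
  case False
  then have j: "(j1 + j2 - 1) + 1 = j1 + j2" by simp
  have nz: "P (i1,j1) \<noteq> 0" "Q (i2,j2) \<noteq> 0" using p q unfolding leading_terms_def by auto
  have "W_comm l P Q (i1 + i2 - int l, j1 + j2 - 1) = 0"
    using bracket_rs_neq_zero[OF P Q _ eq_refl[OF weight_at_corner[OF l p q j, symmetric]]] bracket by blast
  then have "(of_int (int j1 * i2 - i1 * int j2) :: 'a) = 0"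
    using W_comm_apply_corner[OF l \<rho> \<rho>\<sigma> P Q p q corner j] nz l by simp
  then have "int j1 * i2 - i1 * int j2 = 0" by (rule of_int_eq_0_iff[THEN iffD1])
  then show ?thesis by simp
qed simp

lemma diff_le_on_line:
  fixes r s a b a' b' :: rat
  assumes r: "r > 0" and rs: "r + s > 0" and line: "r * a + s * b = r * a' + s * b'" and b: "b' \<le> b"
  shows "a - b \<le> a' - b' \<and> (a - b = a' - b' \<longrightarrow> a = a' \<and> b = b')"
proof -
  have diff: "r * ((a - b) - (a' - b')) = - ((r + s) * (b - b'))"
    using line by (simp add: algebra_simps)
  have "r * ((a - b) - (a' - b')) \<le> 0" unfolding diff using rs b by simp
  then have "a - b \<le> a' - b'" using r by (simp add: mult_le_0_iff)
  moreover have "a = a' \<and> b = b'" if "a - b = a' - b'"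
  proof -
    have "(r + s) * (b - b') = 0" using diff that by simp
    then show ?thesis using rs that by simp
  qed
  ultimately show ?thesis by blast
qed

lemma Supp_lead_on_line:
  assumes "(a,b) \<in> Supp l (lead l \<rho> \<sigma> P)" "(i1,j1) \<in> leading_terms l \<rho> \<sigma> P"
  obtains i j where "(i,j) \<in> leading_terms l \<rho> \<sigma> P" "a = of_int i / of_nat l" "b = of_nat j"
    "of_int \<rho> * a + of_int \<sigma> * b = of_int \<rho> * (of_int i1 / of_nat l) + of_int \<sigma> * of_nat j1"
proof -
  obtain i j where ij: "(i,j) \<in> leading_terms l \<rho> \<sigma> P" "a = of_int i / of_nat l" "b = of_nat j"
    using assms(1) unfolding Supp_lead by auto
  moreover have "weight l \<rho> \<sigma> (i,j) = weight l \<rho> \<sigma> (i1,j1)"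
    using ij(1) assms(2) unfolding leading_terms_def by simp
  ultimately show ?thesis using that unfolding weight_def by simp
qed

lemma st_eqI:
  assumes "finite (Supp l (lead l \<rho> \<sigma> P))" "(a1,b1) \<in> Supp l (lead l \<rho> \<sigma> P)"
    and "\<And>a b. (a,b) \<in> Supp l (lead l \<rho> \<sigma> P) \<Longrightarrow>
           a - b \<le> a1 - b1 \<and> (a - b = a1 - b1 \<longrightarrow> a = a1 \<and> b = b1)"
  shows "st l \<rho> \<sigma> P = (a1,b1)"
proof -
  let ?S = "Supp l (lead l \<rho> \<sigma> P)"
  have M: "Max ((\<lambda>(a,b). a - b) ` ?S) = a1 - b1"
    by (rule Max_eqI) (use assms in auto)
  have T: "{(a,b) \<in> ?S. a - b = a1 - b1} = {(a1,b1)}" using assms(2,3) by auto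
  show ?thesis unfolding st_def Let_def M T by (simp, rule the_equality, auto)
qed

lemma en_eqI:
  assumes "finite (Supp l (lead l \<rho> \<sigma> P))" "(a1,b1) \<in> Supp l (lead l \<rho> \<sigma> P)"
    and "\<And>a b. (a,b) \<in> Supp l (lead l \<rho> \<sigma> P) \<Longrightarrow>
           b - a \<le> b1 - a1 \<and> (b - a = b1 - a1 \<longrightarrow> a = a1 \<and> b = b1)"
  shows "en l \<rho> \<sigma> P = (a1,b1)"
proof -
  let ?S = "Supp l (lead l \<rho> \<sigma> P)"
  have M: "Max ((\<lambda>(a,b). b - a) ` ?S) = b1 - a1"
    by (rule Max_eqI) (use assms in auto)
  have T: "{(a,b) \<in> ?S. b - a = b1 - a1} = {(a1,b1)}" using assms(2,3) by auto
  show ?thesis unfolding en_def Let_def M T by (simp, rule the_equality, auto)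
qed

lemma st_least_Y_degree:
  assumes \<rho>: "\<rho> > 0" and \<rho>\<sigma>: "\<rho> + \<sigma> > 0" and P: "in_W P" "P \<noteq> (\<lambda>_. 0)"
  obtains i1 j1 where "(i1,j1) \<in> leading_terms l \<rho> \<sigma> P"
    "\<And>a b. (a,b) \<in> leading_terms l \<rho> \<sigma> P \<Longrightarrow> j1 \<le> b"
    "st l \<rho> \<sigma> P = (of_int i1 / of_nat l, of_nat j1)"
proof -
  let ?L = "leading_terms l \<rho> \<sigma> P"
  have L: "finite ?L" "?L \<noteq> {}"
    using finite_leading_terms[OF P(1)] leading_terms_nonempty[OF P] by auto
  define j1 where "j1 = Min (snd ` ?L)"
  have "j1 \<in> snd ` ?L" unfolding j1_def using L by (intro Min_in) auto
  then obtain i1 where i1: "(i1,j1) \<in> ?L" by force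
  have least: "j1 \<le> b" if "(a,b) \<in> ?L" for a b
    unfolding j1_def using L that by (intro Min_le) force+
  have "st l \<rho> \<sigma> P = (of_int i1 / of_nat l, of_nat j1)"
  proof (rule st_eqI)
    show "finite (Supp l (lead l \<rho> \<sigma> P))" unfolding Supp_lead using L by simp
    show "(of_int i1 / of_nat l, of_nat j1) \<in> Supp l (lead l \<rho> \<sigma> P)"
      unfolding Supp_lead using i1 by force
    fix a b assume "(a,b) \<in> Supp l (lead l \<rho> \<sigma> P)"
    then obtain i j where "(i,j) \<in> ?L" "b = of_nat j"
      "of_int \<rho> * a + of_int \<sigma> * b = of_int \<rho> * (of_int i1 / of_nat l) + of_int \<sigma> * of_nat j1"
      using Supp_lead_on_line i1 by metis
    then show "a - b \<le> of_int i1 / of_nat l - of_nat j1 \<and>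
        (a - b = of_int i1 / of_nat l - of_nat j1 \<longrightarrow> a = of_int i1 / of_nat l \<and> b = of_nat j1)"
      using diff_le_on_line[of "of_int \<rho>" "of_int \<sigma>" a b "of_int i1 / of_nat l" "of_nat j1"]
        \<rho> \<rho>\<sigma> least by auto
  qed
  with that i1 least show ?thesis by blast
qed

lemma en_greatest_Y_degree:
  assumes \<rho>: "\<rho> > 0" and \<rho>\<sigma>: "\<rho> + \<sigma> > 0" and P: "in_W P" "P \<noteq> (\<lambda>_. 0)"
  obtains i1 j1 where "(i1,j1) \<in> leading_terms l \<rho> \<sigma> P"
    "\<And>a b. (a,b) \<in> leading_terms l \<rho> \<sigma> P \<Longrightarrow> b \<le> j1"
    "en l \<rho> \<sigma> P = (of_int i1 / of_nat l, of_nat j1)"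
proof -
  let ?L = "leading_terms l \<rho> \<sigma> P"
  have L: "finite ?L" "?L \<noteq> {}"
    using finite_leading_terms[OF P(1)] leading_terms_nonempty[OF P] by auto
  define j1 where "j1 = Max (snd ` ?L)"
  have "j1 \<in> snd ` ?L" unfolding j1_def using L by (intro Max_in) auto
  then obtain i1 where i1: "(i1,j1) \<in> ?L" by force
  have greatest: "b \<le> j1" if "(a,b) \<in> ?L" for a b
    unfolding j1_def using L that by (intro Max_ge) force+
  have "en l \<rho> \<sigma> P = (of_int i1 / of_nat l, of_nat j1)"
  proof (rule en_eqI)
    show "finite (Supp l (lead l \<rho> \<sigma> P))" unfolding Supp_lead using L by simp
    show "(of_int i1 / of_nat l, of_nat j1) \<in> Supp l (lead l \<rho> \<sigma> P)"
      unfolding Supp_lead using i1 by force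
    fix a b assume "(a,b) \<in> Supp l (lead l \<rho> \<sigma> P)"
    then obtain i j where "(i,j) \<in> ?L" "b = of_nat j"
      "of_int \<rho> * a + of_int \<sigma> * b = of_int \<rho> * (of_int i1 / of_nat l) + of_int \<sigma> * of_nat j1"
      using Supp_lead_on_line i1 by metis
    then show "b - a \<le> of_nat j1 - of_int i1 / of_nat l \<and>
        (b - a = of_nat j1 - of_int i1 / of_nat l \<longrightarrow> a = of_int i1 / of_nat l \<and> b = of_nat j1)"
      using diff_le_on_line[of "of_int \<rho>" "of_int \<sigma>" "of_int i1 / of_nat l" "of_nat j1" a b]
        \<rho> \<rho>\<sigma> greatest by auto
  qed
  with that i1 greatest show ?thesis by blast
qed

lemma aligned_of_cross_product_eq:
  assumes "i1 * int j2 = int j1 * i2"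
  shows "aligned (of_int i1 / of_nat l, of_nat j1) (of_int i2 / of_nat l, of_nat j2)"
proof -
  have "(of_int i1 :: rat) * of_nat j2 = of_nat j1 * of_int i2"
    using assms by (metis of_int_mult of_int_of_nat_eq)
  then show ?thesis unfolding aligned_def by (simp add: field_simps)
qed

theorem corollary2p7:
  fixes P Q :: "'a::field_char_0 wel" and l :: nat and \<rho> \<sigma> :: int
  assumes "l > 0"
    and "(\<rho>, \<sigma>) \<in> frakV" and "\<sigma> \<le> 0"
    and "in_W P" and "in_W Q" and "P \<noteq> (\<lambda>_. 0)" and "Q \<noteq> (\<lambda>_. 0)"
    and "bracket_rs l \<rho> \<sigma> P Q = (\<lambda>_. 0)"
  shows "aligned (st l \<rho> \<sigma> P) (st l \<rho> \<sigma> Q) \<and> aligned (en l \<rho> \<sigma> P) (en l \<rho> \<sigma> Q)"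
proof -
  have \<rho>\<sigma>: "\<rho> + \<sigma> > 0" using assms(2) unfolding frakV_def by simp
  then have \<rho>: "\<rho> > 0" using assms(3) by simp
  note corner = corner_cross_product_eq[OF assms(1) \<rho> \<rho>\<sigma> assms(4,5) _ _ _ assms(8)]
  show ?thesis
  proof
    obtain i1 j1 i2 j2 where p: "(i1,j1) \<in> leading_terms l \<rho> \<sigma> P"
        "\<And>a b. (a,b) \<in> leading_terms l \<rho> \<sigma> P \<Longrightarrow> j1 \<le> b" "st l \<rho> \<sigma> P = (of_int i1 / of_nat l, of_nat j1)"
      and q: "(i2,j2) \<in> leading_terms l \<rho> \<sigma> Q"
        "\<And>c d. (c,d) \<in> leading_terms l \<rho> \<sigma> Q \<Longrightarrow> j2 \<le> d" "st l \<rho> \<sigma> Q = (of_int i2 / of_nat l, of_nat j2)"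
      using st_least_Y_degree[OF \<rho> \<rho>\<sigma> assms(4,6)] st_least_Y_degree[OF \<rho> \<rho>\<sigma> assms(5,7)] by metis
    have "i1 * int j2 = int j1 * i2" by (rule corner[OF p(1) q(1)]) (use p(2) q(2) in fastforce)
    then show "aligned (st l \<rho> \<sigma> P) (st l \<rho> \<sigma> Q)" unfolding p(3) q(3) by (rule aligned_of_cross_product_eq)
  next
    obtain i1 j1 i2 j2 where p: "(i1,j1) \<in> leading_terms l \<rho> \<sigma> P"
        "\<And>a b. (a,b) \<in> leading_terms l \<rho> \<sigma> P \<Longrightarrow> b \<le> j1" "en l \<rho> \<sigma> P = (of_int i1 / of_nat l, of_nat j1)"
      and q: "(i2,j2) \<in> leading_terms l \<rho> \<sigma> Q"
        "\<And>c d. (c,d) \<in> leading_terms l \<rho> \<sigma> Q \<Longrightarrow> d \<le> j2" "en l \<rho> \<sigma> Q = (of_int i2 / of_nat l, of_nat j2)"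
      using en_greatest_Y_degree[OF \<rho> \<rho>\<sigma> assms(4,6)] en_greatest_Y_degree[OF \<rho> \<rho>\<sigma> assms(5,7)] by metis
    have "i1 * int j2 = int j1 * i2" by (rule corner[OF p(1) q(1)]) (use p(2) q(2) in fastforce)
    then show "aligned (en l \<rho> \<sigma> P) (en l \<rho> \<sigma> Q)" unfolding p(3) q(3) by (rule aligned_of_cross_product_eq)
  qed
qed

end
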